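(* For any pure $n$-qubit state $\psi$ and any $0<\tau<1$, $F_\psi(\tau)\le\dfrac{M_1(\psi)}{\log_2(1/\tau)}$.
   Context: Pauli strings $P_x$, $x\in\{0,1\}^{2n}$, are the $n$-qubit Hermitian Pauli strings; $\alpha_\psi(x)=\mathrm{tr}(\psi P_x)$; the Pauli distribution is $p_\psi(x)=\alpha_\psi(x)^2/2^n$. The CDF is $F_\psi(\tau)=\sum_{x:\,\alpha_\psi(x)^2<\tau}p_\psi(x)$. $M_1(\psi)=H_1(p_\psi)-n$, where $H_1(p)=-\sum_xp(x)\log_2p(x)$. *)

theory Defs
  imports Complex_Main
begin

text \<open>The computational basis of n qubits is indexed by j < 2^n, and qubit q
  of basis index j is the bit (j div 2^q) mod 2. A Pauli label x in {0,1}^(2n) is encoded as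
  a natural number x < 2^(2n); for qubit q its X-bit is bit q of x and its Z-bit is bit (n+q).\<close>

definition bit_of :: "nat \<Rightarrow> nat \<Rightarrow> nat" where
  "bit_of j q = (j div 2 ^ q) mod 2"

text \<open>Single-qubit Hermitian Pauli matrix selected by (X-bit a, Z-bit b):
  (0,0) = I, (1,0) = X, (0,1) = Z, (1,1) = Y. Entry (j,k) with j,k in {0,1}.\<close>
definition pauli1 :: "nat \<Rightarrow> nat \<Rightarrow> nat \<Rightarrow> nat \<Rightarrow> complex" where
  "pauli1 a b j k =
     (if a = 0 \<and> b = 0 then (if j = k then 1 else 0)
      else if a = 1 \<and> b = 0 then (if j \<noteq> k then 1 else 0)
      else if a = 0 \<and> b = 1 then (if j = k then (if j = 0 then 1 else -1) else 0)
      else (if j \<noteq> k then (if j = 1 then \<i> else -\<i>) else 0))"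

definition pauli_string :: "nat \<Rightarrow> nat \<Rightarrow> nat \<Rightarrow> nat \<Rightarrow> complex" where
  "pauli_string n x j k =
     (\<Prod>q<n. pauli1 (bit_of x q) (bit_of x (n + q)) (bit_of j q) (bit_of k q))"

definition pure_dm :: "(nat \<Rightarrow> complex) \<Rightarrow> nat \<Rightarrow> nat \<Rightarrow> complex" where
  "pure_dm v j k = v j * cnj (v k)"

definition is_pure_state :: "nat \<Rightarrow> (nat \<Rightarrow> complex) \<Rightarrow> bool" where
  "is_pure_state n v \<longleftrightarrow> (\<Sum>j<2^n. (cmod (v j))\<^sup>2) = 1"

text \<open>alpha_psi(x) = tr(psi P_x) (real, since both are Hermitian; we take the real part).\<close>
definition pauli_coeff :: "nat \<Rightarrow> (nat \<Rightarrow> complex) \<Rightarrow> nat \<Rightarrow> real" where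
  "pauli_coeff n v x = Re (\<Sum>j<2^n. \<Sum>k<2^n. pure_dm v j k * pauli_string n x k j)"

definition pauli_dist :: "nat \<Rightarrow> (nat \<Rightarrow> complex) \<Rightarrow> nat \<Rightarrow> real" where
  "pauli_dist n v x = (pauli_coeff n v x)\<^sup>2 / 2 ^ n"

definition pauli_cdf :: "nat \<Rightarrow> (nat \<Rightarrow> complex) \<Rightarrow> real \<Rightarrow> real" where
  "pauli_cdf n v \<tau> = (\<Sum>x \<in> {x. x < 2^(2*n) \<and> (pauli_coeff n v x)\<^sup>2 < \<tau>}. pauli_dist n v x)"

definition shannon_H1 :: "nat \<Rightarrow> (nat \<Rightarrow> real) \<Rightarrow> real" where
  "shannon_H1 N p = - (\<Sum>x<N. if p x = 0 then 0 else p x * log 2 (p x))"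

definition stab_renyi_M1 :: "nat \<Rightarrow> (nat \<Rightarrow> complex) \<Rightarrow> real" where
  "stab_renyi_M1 n v = shannon_H1 (2^(2*n)) (pauli_dist n v) - real n"

end

theory Submission
  imports Defs
begin

text \<open>Write \<alpha>(x) = tr(\<psi> P_x). A Pauli string has exactly one entry of modulus one in
  each row and each column, so Schur's test gives \<alpha>(x)^2 \<le> 1. The Pauli strings are orthogonal
  for the Hilbert-Schmidt inner product, so by Parseval \<Sum>_x \<alpha>(x)^2 = 2^n tr(\<psi>^2) = 2^n and
  p_\<psi> = \<alpha>^2 / 2^n is a probability distribution. Hence M_1(\<psi>) is the p_\<psi>-expectation of the
  nonnegative surprisal log_2(1/\<alpha>(x)^2), which exceeds log_2(1/\<tau>) on the event \<alpha>(x)^2 < \<tau>;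
  Markov's inequality bounds the probability of that event, which is F_\<psi>(\<tau>).\<close>

lemma sum_lessThan_mult_split:
  fixes f :: "nat \<Rightarrow> 'a::comm_monoid_add"
  shows "(\<Sum>x<k*m. f x) = (\<Sum>b<k. \<Sum>a<m. f (a + m*b))"
proof -
  have "(\<Sum>x<k*m. f x) = (\<Sum>b<k. sum f {b*m..<b*m+m})"
    by (rule sum.nat_group[symmetric])
  also have "\<dots> = (\<Sum>b<k. \<Sum>a<m. f (a + m*b))"
  proof (rule sum.cong[OF refl])
    fix b
    have "sum f {0+b*m..<m+b*m} = (\<Sum>a\<in>{0..<m}. f (a + b*m))"
      by (rule sum.shift_bounds_nat_ivl)
    then show "sum f {b*m..<b*m+m} = (\<Sum>a<m. f (a + m*b))"
      by (simp add: atLeast0LessThan add.commute mult.commute)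
  qed
  finally show ?thesis .
qed

lemma prod_if_const:
  fixes c :: "'a::comm_semiring_1"
  shows "(\<Prod>q<n. if P q then c else 0) = (if \<forall>q<n. P q then c^n else 0)"
proof (cases "\<forall>q<n. P q")
  case False
  then obtain q where "q < n" "\<not> P q" by auto
  then show ?thesis using False by (intro trans[OF prod_zero]) auto
qed simp

lemma sum_sum_delta:
  assumes "finite A" "finite B" "a \<in> A" "b \<in> B"
  shows "(\<Sum>x\<in>A. \<Sum>y\<in>B. if a = x \<and> b = y then f x y else 0) = f a b"
proof -
  have "(\<Sum>x\<in>A. \<Sum>y\<in>B. if a = x \<and> b = y then f x y else 0)
      = (\<Sum>x\<in>A. if a = x then (\<Sum>y\<in>B. if b = y then f x y else 0) else 0)"
    by (intro sum.cong) auto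
  then show ?thesis using assms by simp
qed

lemma bit_of_0_or_1: "bit_of j q = 0 \<or> bit_of j q = 1"
  unfolding bit_of_def by auto

lemma bit_of_add_mult_low:
  assumes "q < m" shows "bit_of (k + 2^m*c) q = bit_of k q"
proof -
  obtain d where "m = Suc (q + d)" using assms less_iff_Suc_add by auto
  then have expand: "k + 2^m*c = k + 2^q * (2 * (2^d * c))" by (simp add: power_add mult_ac)
  show ?thesis unfolding bit_of_def expand by simp
qed

lemma bit_of_add_mult_high:
  assumes "k < 2^m" shows "bit_of (k + 2^m*c) (m+q) = bit_of c q"
proof -
  have "(k + 2^m*c) div 2^m = c" using assms by simp
  then show ?thesis unfolding bit_of_def by (simp add: power_add div_mult2_eq)
qed

lemma bit_of_eq_iff:
  fixes a b :: nat
  assumes "a < 2^n" "b < 2^n"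
  shows "(\<forall>q<n. bit_of a q = bit_of b q) \<longleftrightarrow> a = b"
proof
  assume same: "\<forall>q<n. bit_of a q = bit_of b q"
  show "a = b"
  proof (rule bit_eqI)
    fix q
    show "bit a q = bit b q"
    proof (cases "q < n")
      case True
      then show ?thesis using same by (auto simp: bit_iff_odd bit_of_def odd_iff_mod_2_eq_one)
    next
      case False
      then have "a < 2^q" "b < 2^q"
        using assms order_less_le_trans[OF _ power_increasing[of n q "2::nat"]] by auto
      then show ?thesis by (simp add: bit_iff_odd)
    qed
  qed
qed simp

lemma sum_prod_bit_of:
  fixes g :: "nat \<Rightarrow> nat \<Rightarrow> 'a::comm_semiring_1"
  shows "(\<Sum>k<2^m. \<Prod>q<m. g q (bit_of k q)) = (\<Prod>q<m. g q 0 + g q 1)"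
proof (induction m)
  case 0
  then show ?case by (simp add: bit_of_def)
next
  case (Suc m)
  have top: "bit_of (k + 2^m*c) m = c mod 2" if "k < 2^m" for k c
    using bit_of_add_mult_high[OF that, of c 0] by (simp add: bit_of_def)
  have "(\<Sum>k<2^Suc m. \<Prod>q<Suc m. g q (bit_of k q))
      = (\<Sum>c<2. \<Sum>k<2^m. \<Prod>q<Suc m. g q (bit_of (k + 2^m*c) q))"
    using sum_lessThan_mult_split[of "\<lambda>k. \<Prod>q<Suc m. g q (bit_of k q)" 2 "2^m"]
    by (simp add: mult.commute)
  also have "\<dots> = (\<Sum>c<2. \<Sum>k<2^m. (\<Prod>q<m. g q (bit_of k q)) * g m (c mod 2))"
    by (intro sum.cong refl) (simp add: bit_of_add_mult_low top)
  also have "\<dots> = (\<Prod>q<m. g q 0 + g q 1) * (g m 0 + g m 1)"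
  proof -
    have sum_2: "\<And>h::nat\<Rightarrow>'a. (\<Sum>c<2::nat. h c) = h 0 + h 1" by (simp add: numeral_2_eq_2)
    show ?thesis unfolding sum_2 by (simp add: Suc.IH flip: sum_distrib_right distrib_left)
  qed
  finally show ?case by simp
qed

lemma sum_prod_bit_of_pairs:
  fixes g :: "nat \<Rightarrow> nat \<Rightarrow> nat \<Rightarrow> 'a::comm_semiring_1"
  shows "(\<Sum>x<2^(2*n). \<Prod>q<n. g q (bit_of x q) (bit_of x (n+q)))
       = (\<Prod>q<n. g q 0 0 + g q 1 0 + (g q 0 1 + g q 1 1))"
proof -
  have "(\<Sum>x<2^(2*n). \<Prod>q<n. g q (bit_of x q) (bit_of x (n+q)))
      = (\<Sum>b<2^n. \<Sum>a<2^n. \<Prod>q<n. g q (bit_of a q) (bit_of b q))"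
    using sum_lessThan_mult_split[of "\<lambda>x. \<Prod>q<n. g q (bit_of x q) (bit_of x (n+q))" "2^n" "2^n"]
    by (simp add: bit_of_add_mult_low bit_of_add_mult_high flip: power_add mult_2)
  also have "\<dots> = (\<Sum>b<2^n. \<Prod>q<n. g q 0 (bit_of b q) + g q 1 (bit_of b q))"
    by (rule sum.cong[OF refl], rule sum_prod_bit_of)
  also have "\<dots> = (\<Prod>q<n. g q 0 0 + g q 1 0 + (g q 0 1 + g q 1 1))"
    by (rule sum_prod_bit_of)
  finally show ?thesis .
qed

lemma norm_quadratic_form_le:
  fixes M :: "'a \<Rightarrow> 'a \<Rightarrow> complex" and v :: "'a \<Rightarrow> complex"
  assumes columns: "\<And>j. j \<in> D \<Longrightarrow> (\<Sum>k\<in>D. cmod (M k j)) \<le> 1"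
    and rows: "\<And>k. k \<in> D \<Longrightarrow> (\<Sum>j\<in>D. cmod (M k j)) \<le> 1"
  shows "cmod (\<Sum>j\<in>D. \<Sum>k\<in>D. v j * cnj (v k) * M k j) \<le> (\<Sum>j\<in>D. (cmod (v j))^2)"
proof -
  let ?m = "\<lambda>k j. cmod (M k j)"
  have am_gm: "cmod (v j) * cmod (v k) \<le> ((cmod (v j))^2 + (cmod (v k))^2) / 2" for j k
    using sum_squares_bound[of "cmod (v j)" "cmod (v k)"] by simp
  have "cmod (\<Sum>j\<in>D. \<Sum>k\<in>D. v j * cnj (v k) * M k j)
      \<le> (\<Sum>j\<in>D. \<Sum>k\<in>D. cmod (v j) * cmod (v k) * ?m k j)"
    by (intro order.trans[OF norm_sum] sum_mono) (simp add: norm_mult)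
  also have "\<dots> \<le> (\<Sum>j\<in>D. \<Sum>k\<in>D. ((cmod (v j))^2 + (cmod (v k))^2) / 2 * ?m k j)"
    by (intro sum_mono mult_right_mono am_gm) simp
  also have "\<dots> = (\<Sum>j\<in>D. (cmod (v j))^2 * (\<Sum>k\<in>D. ?m k j)) / 2
                 + (\<Sum>j\<in>D. \<Sum>k\<in>D. (cmod (v k))^2 * ?m k j) / 2"
    by (simp add: sum_distrib_left sum_divide_distrib add_divide_distrib distrib_right sum.distrib)
  also have "(\<Sum>j\<in>D. \<Sum>k\<in>D. (cmod (v k))^2 * ?m k j) = (\<Sum>k\<in>D. (cmod (v k))^2 * (\<Sum>j\<in>D. ?m k j))"
    by (subst sum.swap) (simp add: sum_distrib_left)
  also have "(\<Sum>j\<in>D. (cmod (v j))^2 * (\<Sum>k\<in>D. ?m k j)) / 2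
      + (\<Sum>k\<in>D. (cmod (v k))^2 * (\<Sum>j\<in>D. ?m k j)) / 2
      \<le> (\<Sum>j\<in>D. (cmod (v j))^2) / 2 + (\<Sum>k\<in>D. (cmod (v k))^2) / 2"
  proof -
    have "(cmod (v j))^2 * (\<Sum>k\<in>D. ?m k j) \<le> (cmod (v j))^2" if "j \<in> D" for j
      using columns[OF that] by (simp add: mult_left_le)
    moreover have "(cmod (v k))^2 * (\<Sum>j\<in>D. ?m k j) \<le> (cmod (v k))^2" if "k \<in> D" for k
      using rows[OF that] by (simp add: mult_left_le)
    ultimately show ?thesis by (intro add_mono divide_right_mono sum_mono) auto
  qed
  finally show ?thesis by simp
qed

lemma parseval_orthogonal_matrices:
  fixes P :: "'x \<Rightarrow> 'a \<Rightarrow> 'a \<Rightarrow> complex" and A :: "'a \<Rightarrow> 'a \<Rightarrow> complex"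
  assumes "finite D"
    and orthogonal: "\<And>k j k' j'. k \<in> D \<Longrightarrow> j \<in> D \<Longrightarrow> k' \<in> D \<Longrightarrow> j' \<in> D \<Longrightarrow>
      (\<Sum>x\<in>X. P x k j * cnj (P x k' j')) = (if k = k' \<and> j = j' then of_real c else 0)"
  shows "(\<Sum>x\<in>X. (cmod (\<Sum>j\<in>D. \<Sum>k\<in>D. A j k * P x k j))^2)
       = c * (\<Sum>j\<in>D. \<Sum>k\<in>D. (cmod (A j k))^2)"
proof -
  define z where "z x = (\<Sum>j\<in>D. \<Sum>k\<in>D. A j k * P x k j)" for x
  have "complex_of_real (\<Sum>x\<in>X. (cmod (z x))^2) = (\<Sum>x\<in>X. z x * cnj (z x))"
    by (simp only: of_real_sum complex_norm_square)
  also have "\<dots> = (\<Sum>x\<in>X. \<Sum>j\<in>D. \<Sum>k\<in>D. \<Sum>j'\<in>D. \<Sum>k'\<in>D.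
                     A j k * cnj (A j' k') * (P x k j * cnj (P x k' j')))"
    unfolding z_def cnj_sum sum_distrib_right unfolding sum_distrib_left by (simp add: mult_ac)
  also have "\<dots> = (\<Sum>j\<in>D. \<Sum>k\<in>D. \<Sum>j'\<in>D. \<Sum>k'\<in>D.
                     A j k * cnj (A j' k') * (\<Sum>x\<in>X. P x k j * cnj (P x k' j')))"
    by (simp only: sum.swap[where A = X] sum_distrib_left)
  also have "\<dots> = (\<Sum>j\<in>D. \<Sum>k\<in>D. \<Sum>j'\<in>D. \<Sum>k'\<in>D.
                     if j = j' \<and> k = k' then A j k * cnj (A j' k') * of_real c else 0)"
    by (intro sum.cong refl) (auto simp: orthogonal)
  also have "\<dots> = (\<Sum>j\<in>D. \<Sum>k\<in>D. A j k * cnj (A j k) * of_real c)"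
    by (intro sum.cong refl) (simp add: sum_sum_delta assms)
  also have "\<dots> = complex_of_real (c * (\<Sum>j\<in>D. \<Sum>k\<in>D. (cmod (A j k))^2))"
    unfolding of_real_mult of_real_sum complex_norm_square sum_distrib_left by (simp add: mult_ac)
  finally show ?thesis unfolding z_def of_real_eq_iff .
qed

lemma cnj_pauli1:
  assumes "s = 0 \<or> s = 1" "t = 0 \<or> t = 1"
  shows "cnj (pauli1 a b s t) = pauli1 a b t s"
  using assms unfolding pauli1_def by auto

lemma cnj_pauli_string: "cnj (pauli_string n x k j) = pauli_string n x j k"
  unfolding pauli_string_def cnj_prod by (intro prod.cong refl cnj_pauli1 bit_of_0_or_1)

lemma pauli1_column_norm_sum:
  assumes "s = 0 \<or> s = 1"
  shows "cmod (pauli1 a b 0 s) + cmod (pauli1 a b 1 s) = 1"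
  using assms unfolding pauli1_def by auto

lemma pauli_string_column_norm_sum: "(\<Sum>k<2^n. cmod (pauli_string n x k j)) = 1"
proof -
  have "(\<Sum>k<2^n. cmod (pauli_string n x k j))
      = (\<Sum>k<2^n. \<Prod>q<n. cmod (pauli1 (bit_of x q) (bit_of x (n+q)) (bit_of k q) (bit_of j q)))"
    unfolding pauli_string_def by (simp add: prod_norm)
  also have "\<dots> = 1"
    by (subst sum_prod_bit_of) (intro prod.neutral ballI pauli1_column_norm_sum bit_of_0_or_1)
  finally show ?thesis .
qed

lemma pauli_string_row_norm_sum: "(\<Sum>j<2^n. cmod (pauli_string n x k j)) = 1"
proof -
  have "cmod (pauli_string n x k j) = cmod (pauli_string n x j k)" for j
    by (metis cnj_pauli_string complex_mod_cnj)
  then show ?thesis using pauli_string_column_norm_sum[of n x k] by simp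
qed

lemma pauli1_orthogonal:
  assumes "k = 0 \<or> k = 1" "j = 0 \<or> j = 1" "k' = 0 \<or> k' = 1" "j' = 0 \<or> j' = 1"
  shows "pauli1 0 0 k j * cnj (pauli1 0 0 k' j') + pauli1 1 0 k j * cnj (pauli1 1 0 k' j')
       + (pauli1 0 1 k j * cnj (pauli1 0 1 k' j') + pauli1 1 1 k j * cnj (pauli1 1 1 k' j'))
       = (if k = k' \<and> j = j' then 2 else 0)"
  using assms unfolding pauli1_def by (auto simp: complex_eq_iff)

lemma pauli_string_orthogonal:
  assumes "k < 2^n" "j < 2^n" "k' < 2^n" "j' < 2^n"
  shows "(\<Sum>x<2^(2*n). pauli_string n x k j * cnj (pauli_string n x k' j'))
       = (if k = k' \<and> j = j' then 2^n else 0)"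
proof -
  define h where "h q s t = pauli1 s t (bit_of k q) (bit_of j q) * cnj (pauli1 s t (bit_of k' q) (bit_of j' q))"
    for q s t
  have "(\<Sum>x<2^(2*n). pauli_string n x k j * cnj (pauli_string n x k' j'))
      = (\<Sum>x<2^(2*n). \<Prod>q<n. h q (bit_of x q) (bit_of x (n+q)))"
    unfolding pauli_string_def h_def cnj_prod by (simp add: prod.distrib)
  also have "\<dots> = (\<Prod>q<n. h q 0 0 + h q 1 0 + (h q 0 1 + h q 1 1))"
    by (rule sum_prod_bit_of_pairs)
  also have "\<dots> = (\<Prod>q<n. if bit_of k q = bit_of k' q \<and> bit_of j q = bit_of j' q then 2 else 0)"
    unfolding h_def by (intro prod.cong refl pauli1_orthogonal bit_of_0_or_1)
  also have "\<dots> = (if k = k' \<and> j = j' then 2^n else 0)"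
    unfolding prod_if_const using bit_of_eq_iff[OF assms(1,3)] bit_of_eq_iff[OF assms(2,4)] by auto
  finally show ?thesis .
qed

definition pauli_trace :: "nat \<Rightarrow> (nat \<Rightarrow> complex) \<Rightarrow> nat \<Rightarrow> complex" where
  "pauli_trace n v x = (\<Sum>j<2^n. \<Sum>k<2^n. pure_dm v j k * pauli_string n x k j)"

lemma pauli_trace_eq_coeff: "pauli_trace n v x = of_real (pauli_coeff n v x)"
proof -
  have "cnj (pauli_trace n v x) = (\<Sum>j<2^n. \<Sum>k<2^n. cnj (v j) * v k * pauli_string n x j k)"
    unfolding pauli_trace_def pure_dm_def by (simp add: cnj_pauli_string)
  also have "\<dots> = pauli_trace n v x"
    unfolding pauli_trace_def pure_dm_def by (subst sum.swap) (simp add: mult_ac)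
  finally have "pauli_trace n v x \<in> \<real>" by (simp add: Reals_cnj_iff)
  moreover have "pauli_coeff n v x = Re (pauli_trace n v x)"
    unfolding pauli_coeff_def pauli_trace_def by (rule refl)
  ultimately show ?thesis by (simp only: of_real_Re)
qed

lemma pauli_coeff_sq_le_1:
  assumes "is_pure_state n v"
  shows "(pauli_coeff n v x)^2 \<le> 1"
proof -
  have "cmod (pauli_trace n v x) \<le> 1"
    using norm_quadratic_form_le[of "{..<2^n}" "pauli_string n x" v] assms
    unfolding pauli_trace_def pure_dm_def is_pure_state_def
    by (simp add: pauli_string_column_norm_sum pauli_string_row_norm_sum)
  then show ?thesis by (simp add: pauli_trace_eq_coeff abs_square_le_1)
qed

lemma sum_pauli_coeff_sq:
  assumes "is_pure_state n v"
  shows "(\<Sum>x<2^(2*n). (pauli_coeff n v x)^2) = 2^n"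
proof -
  have "(\<Sum>x<2^(2*n). (cmod (pauli_trace n v x))^2)
      = 2^n * (\<Sum>j<2^n. \<Sum>k<2^n. (cmod (pure_dm v j k))^2)"
    unfolding pauli_trace_def by (rule parseval_orthogonal_matrices) (simp_all add: pauli_string_orthogonal)
  also have "(\<Sum>j<2^n. \<Sum>k<2^n. (cmod (pure_dm v j k))^2)
           = (\<Sum>j<2^n. (cmod (v j))^2) * (\<Sum>k<2^n. (cmod (v k))^2)"
    by (simp add: pure_dm_def norm_mult power_mult_distrib sum_product)
  finally show ?thesis using assms by (simp add: is_pure_state_def pauli_trace_eq_coeff)
qed

lemma shannon_H1_rescaled:
  fixes \<alpha> :: "nat \<Rightarrow> real"
  assumes nonneg: "\<And>x. x < N \<Longrightarrow> 0 \<le> \<alpha> x" and total: "(\<Sum>x<N. \<alpha> x) = D" and "0 < D"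
  shows "shannon_H1 N (\<lambda>x. \<alpha> x / D) = log 2 D - (\<Sum>x<N. \<alpha> x * log 2 (\<alpha> x)) / D"
proof -
  have summand: "(if \<alpha> x / D = 0 then 0 else \<alpha> x / D * log 2 (\<alpha> x / D))
      = \<alpha> x * log 2 (\<alpha> x) / D - \<alpha> x / D * log 2 D" if "x < N" for x
  proof (cases "\<alpha> x = 0")
    case False
    then show ?thesis using nonneg[OF that] \<open>0 < D\<close> by (simp add: log_divide field_simps)
  qed simp
  have "shannon_H1 N (\<lambda>x. \<alpha> x / D) = - (\<Sum>x<N. \<alpha> x * log 2 (\<alpha> x) / D - \<alpha> x / D * log 2 D)"
    unfolding shannon_H1_def using summand by simp
  also have "\<dots> = log 2 D - (\<Sum>x<N. \<alpha> x * log 2 (\<alpha> x)) / D"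
    using total \<open>0 < D\<close>
    by (simp add: sum_subtractf flip: sum_divide_distrib sum_distrib_right)
  finally show ?thesis .
qed

lemma sum_less_threshold_mult_log_le:
  fixes \<alpha> :: "nat \<Rightarrow> real"
  assumes bounds: "\<And>x. x < N \<Longrightarrow> 0 \<le> \<alpha> x \<and> \<alpha> x \<le> 1"
  shows "(\<Sum>x\<in>{x. x < N \<and> \<alpha> x < \<tau>}. \<alpha> x) * log 2 (1 / \<tau>) \<le> - (\<Sum>x<N. \<alpha> x * log 2 (\<alpha> x))"
proof -
  let ?S = "{x. x < N \<and> \<alpha> x < \<tau>}"
  have nonneg: "0 \<le> - (\<alpha> x * log 2 (\<alpha> x))" if "x < N" for x
    using bounds[OF that] by (cases "\<alpha> x = 0") (auto simp: mult_nonneg_nonpos)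
  have below: "\<alpha> x * log 2 (1 / \<tau>) \<le> - (\<alpha> x * log 2 (\<alpha> x))" if "x \<in> ?S" for x
  proof (cases "\<alpha> x = 0")
    case False
    with that bounds have "0 < \<alpha> x" "\<alpha> x < \<tau>" by force+
    then have "log 2 (1 / \<tau>) \<le> - log 2 (\<alpha> x)" by (simp add: log_divide)
    then show ?thesis using \<open>0 < \<alpha> x\<close> by (simp add: mult_left_mono flip: mult_minus_right)
  qed simp
  have "(\<Sum>x\<in>?S. \<alpha> x) * log 2 (1 / \<tau>) = (\<Sum>x\<in>?S. \<alpha> x * log 2 (1 / \<tau>))"
    by (simp add: sum_distrib_right)
  also have "\<dots> \<le> (\<Sum>x\<in>?S. - (\<alpha> x * log 2 (\<alpha> x)))"
    by (rule sum_mono) (rule below)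
  also have "\<dots> \<le> (\<Sum>x<N. - (\<alpha> x * log 2 (\<alpha> x)))"
    by (rule sum_mono2) (use nonneg in auto)
  finally show ?thesis by (simp add: sum_negf)
qed

theorem lemma3:
  fixes n :: nat and v :: "nat \<Rightarrow> complex" and \<tau> :: real
  assumes "is_pure_state n v" and "0 < \<tau>" and "\<tau> < 1"
  shows "pauli_cdf n v \<tau> \<le> stab_renyi_M1 n v / log 2 (1 / \<tau>)"
proof -
  define \<alpha> where "\<alpha> x = (pauli_coeff n v x)^2" for x
  have bounds: "0 \<le> \<alpha> x \<and> \<alpha> x \<le> 1" for x
    using pauli_coeff_sq_le_1[OF assms(1)] by (simp add: \<alpha>_def)
  have total: "(\<Sum>x<2^(2*n). \<alpha> x) = 2^n"
    using sum_pauli_coeff_sq[OF assms(1)] by (simp add: \<alpha>_def)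
  have dist: "pauli_dist n v = (\<lambda>x. \<alpha> x / 2^n)"
    by (simp add: fun_eq_iff pauli_dist_def \<alpha>_def)
  have M1: "stab_renyi_M1 n v = - (\<Sum>x<2^(2*n). \<alpha> x * log 2 (\<alpha> x)) / 2^n"
    using shannon_H1_rescaled[of "2^(2*n)" \<alpha> "2^n"] bounds total
    by (simp add: stab_renyi_M1_def dist log_nat_power)
  have cdf: "pauli_cdf n v \<tau> = (\<Sum>x\<in>{x. x < 2^(2*n) \<and> \<alpha> x < \<tau>}. \<alpha> x) / 2^n"
    unfolding pauli_cdf_def dist by (simp add: \<alpha>_def sum_divide_distrib)
  have "0 < log 2 (1 / \<tau>)" using assms(2,3) by simp
  then show ?thesis
    using sum_less_threshold_mult_log_le[of "2^(2*n)" \<alpha> \<tau>] bounds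
    by (simp add: cdf M1 field_simps)
qed

end
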